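(* In the multi-unit auction with unit demand (with $m$ units, $n$ bidders, $1\le m\le n-1$, types in $[L,U]$), if a feasible anonymous linear Groves mechanism is undominated, then it is an OEL mechanism.
   Context: Multi-unit auction with unit demand: $m$ identical units, $n\ge 2$ bidders, $1\le m\le n-1$, each bidder wants at most one unit; bidder $i$'s type $\theta_i\in[L,U]$ ($L<U$) is her value for one unit. Efficient decisions allocate units to $m$ highest bidders. Groves mechanisms: $t_i(\theta)=\sum_{j\ne i}v_j(f(\theta),\theta_j)+h_i(\theta_{-i})$; player $i$'s utility is value plus $t_i$. The VCG (Clarke) mechanism uses $h_i(\theta_{-i})=-\max_d\sum_{j\ne i}v_j(d,\theta_j)$; here $\sum_i t_i^{VCG}(\theta)=-m[\theta]_{m+1}$, where $[x]_j$ denotes the $j$th highest entry of a vector $x$. An anonymous linear Groves mechanism has $t_i(\theta)=t_i^{VCG}(\theta)+a_0+\sum_{j=1}^{n-1}a_j[\theta_{-i}]_j$ for constants $a_0,\dots,a_{n-1}$. Feasible: $\sum_i t_i(\theta)\le 0$ for all $\theta$. A feasible Groves mechanism $t$ is undominated if no other feasible Groves mechanism $t'$ dominates it, i.e. there is no $t'$ with $t_i(\theta)\le t'_i(\theta)$ for all $\theta,i$ and strict inequality for some $\theta,i$. OEL mechanisms: $t_i(\theta)=t_i^{VCG}(\theta)+c_0+\sum_{j=1}^{n-1}c_j[\theta_{-i}]_j$, where for an index $k\in\{0,\dots,n\}$ with $k-m$ odd the constants are: writing $\alpha_i=(-1)^{m-i}\binom{n-i-1}{n-m-1}/\binom{m-1}{i-1}$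 and $\beta_i=(-1)^{m-i-1}\binom{i-1}{m-1}/\binom{n-m-1}{n-i-1}$, • $k=0$: $c_i=\alpha_i$ for $i=1,\dots,m$; $c_0=Um/n-U\sum_{i=1}^m\alpha_i$; other $c_i=0$. • $1\le k\le m$: $c_i=\alpha_i$ for $i=k+1,\dots,m$; $c_k=m/n-\sum_{i=k+1}^m\alpha_i$; other $c_i=0$ (including $c_0$). • $m+1\le k\le n-1$: $c_i=\beta_i$ for $i=m+1,\dots,k-1$; $c_k=m/n-\sum_{i=m+1}^{k-1}\beta_i$; other $c_i=0$. • $k=n$: $c_i=\beta_i$ for $i=m+1,\dots,n-1$; $c_0=Lm/n-L\sum_{i=m+1}^{n-1}\beta_i$; other $c_i=0$. *)

theory Defs
  imports Complex_Main
begin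

text \<open>Bidders are 0,...,n-1; a type profile is theta :: nat => real, only the
entries below n matter.  Transfer mechanisms are t :: nat => (nat => real) => real,
t i theta being the transfer to bidder i.\<close>

definition type_profiles :: "nat \<Rightarrow> real \<Rightarrow> real \<Rightarrow> (nat \<Rightarrow> real) set" where
  "type_profiles n L U = {\<theta>. \<forall>i<n. \<theta> i \<in> {L..U}}"

definition decisions :: "nat \<Rightarrow> nat \<Rightarrow> nat set set" where
  "decisions n m = {S. S \<subseteq> {..<n} \<and> card S = m}"

definition valuation :: "nat set \<Rightarrow> nat \<Rightarrow> real \<Rightarrow> real" where
  "valuation S j x = (if j \<in> S then x else 0)"

definition efficient :: "nat \<Rightarrow> nat \<Rightarrow> real \<Rightarrow> real \<Rightarrow> ((nat \<Rightarrow> real) \<Rightarrow> nat set) \<Rightarrow> bool" where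
  "efficient n m L U f \<longleftrightarrow> (\<forall>\<theta>\<in>type_profiles n L U. f \<theta> \<in> decisions n m \<and>
     (\<forall>S\<in>decisions n m. (\<Sum>j<n. valuation S j (\<theta> j)) \<le> (\<Sum>j<n. valuation (f \<theta>) j (\<theta> j))))"

text \<open>[x]_j : j-th highest entry (j >= 1) of a vector given as a list\<close>
definition kth_highest :: "nat \<Rightarrow> real list \<Rightarrow> real" where
  "kth_highest j xs = rev (sort xs) ! (j - 1)"

definition others :: "nat \<Rightarrow> nat \<Rightarrow> (nat \<Rightarrow> real) \<Rightarrow> real list" where
  "others n i \<theta> = map \<theta> (filter (\<lambda>j. j \<noteq> i) [0..<n])"

definition depends_only_on_others :: "nat \<Rightarrow> nat \<Rightarrow> ((nat \<Rightarrow> real) \<Rightarrow> real) \<Rightarrow> bool" where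
  "depends_only_on_others n i g \<longleftrightarrow>
     (\<forall>\<theta> \<theta>'. (\<forall>j<n. j \<noteq> i \<longrightarrow> \<theta> j = \<theta>' j) \<longrightarrow> g \<theta> = g \<theta>')"

definition groves :: "nat \<Rightarrow> real \<Rightarrow> real \<Rightarrow> ((nat \<Rightarrow> real) \<Rightarrow> nat set)
    \<Rightarrow> (nat \<Rightarrow> (nat \<Rightarrow> real) \<Rightarrow> real) \<Rightarrow> bool" where
  "groves n L U f t \<longleftrightarrow> (\<exists>h. (\<forall>i<n. depends_only_on_others n i (h i)) \<and>
     (\<forall>\<theta>\<in>type_profiles n L U. \<forall>i<n.
        t i \<theta> = (\<Sum>j\<in>{..<n} - {i}. valuation (f \<theta>) j (\<theta> j)) + h i \<theta>))"

text \<open>VCG (Clarke) transfer: h_i(theta_{-i}) = - max_d sum_{j<>i} v_j = - (sum of the m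
highest entries of theta_{-i}).\<close>
definition vcg :: "nat \<Rightarrow> nat \<Rightarrow> ((nat \<Rightarrow> real) \<Rightarrow> nat set) \<Rightarrow> nat \<Rightarrow> (nat \<Rightarrow> real) \<Rightarrow> real" where
  "vcg n m f i \<theta> = (\<Sum>j\<in>{..<n} - {i}. valuation (f \<theta>) j (\<theta> j))
      - (\<Sum>j=1..m. kth_highest j (others n i \<theta>))"

definition linear_mech :: "nat \<Rightarrow> nat \<Rightarrow> ((nat \<Rightarrow> real) \<Rightarrow> nat set) \<Rightarrow> (nat \<Rightarrow> real)
    \<Rightarrow> nat \<Rightarrow> (nat \<Rightarrow> real) \<Rightarrow> real" where
  "linear_mech n m f a i \<theta> = vcg n m f i \<theta> + a 0
      + (\<Sum>j=1..n-1. a j * kth_highest j (others n i \<theta>))"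

definition feasible :: "nat \<Rightarrow> real \<Rightarrow> real \<Rightarrow> (nat \<Rightarrow> (nat \<Rightarrow> real) \<Rightarrow> real) \<Rightarrow> bool" where
  "feasible n L U t \<longleftrightarrow> (\<forall>\<theta>\<in>type_profiles n L U. (\<Sum>i<n. t i \<theta>) \<le> 0)"

definition dominates :: "nat \<Rightarrow> real \<Rightarrow> real \<Rightarrow> (nat \<Rightarrow> (nat \<Rightarrow> real) \<Rightarrow> real)
    \<Rightarrow> (nat \<Rightarrow> (nat \<Rightarrow> real) \<Rightarrow> real) \<Rightarrow> bool" where
  "dominates n L U t' t \<longleftrightarrow>
     (\<forall>\<theta>\<in>type_profiles n L U. \<forall>i<n. t i \<theta> \<le> t' i \<theta>) \<and>
     (\<exists>\<theta>\<in>type_profiles n L U. \<exists>i<n. t i \<theta> < t' i \<theta>)"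

definition undominated :: "nat \<Rightarrow> real \<Rightarrow> real \<Rightarrow> ((nat \<Rightarrow> real) \<Rightarrow> nat set)
    \<Rightarrow> (nat \<Rightarrow> (nat \<Rightarrow> real) \<Rightarrow> real) \<Rightarrow> bool" where
  "undominated n L U f t \<longleftrightarrow> groves n L U f t \<and> feasible n L U t \<and>
     \<not> (\<exists>t'. groves n L U f t' \<and> feasible n L U t' \<and> dominates n L U t' t)"

definition alpha :: "nat \<Rightarrow> nat \<Rightarrow> nat \<Rightarrow> real" where
  "alpha n m i = (-1) ^ (m - i) * real ((n - i - 1) choose (n - m - 1)) / real ((m - 1) choose (i - 1))"

text \<open>beta uses (-1)^(i-m-1), equal to (-1)^(m-i-1) for i >= m+1.\<close>
definition beta :: "nat \<Rightarrow> nat \<Rightarrow> nat \<Rightarrow> real" where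
  "beta n m i = (-1) ^ (i - m - 1) * real ((i - 1) choose (m - 1)) / real ((n - m - 1) choose (n - i - 1))"

definition oel_coeffs :: "nat \<Rightarrow> nat \<Rightarrow> real \<Rightarrow> real \<Rightarrow> nat \<Rightarrow> nat \<Rightarrow> real" where
  "oel_coeffs n m L U k i =
    (if k = 0 then
       (if i = 0 then U * real m / real n - U * (\<Sum>l=1..m. alpha n m l)
        else if 1 \<le> i \<and> i \<le> m then alpha n m i else 0)
     else if k \<le> m then
       (if k + 1 \<le> i \<and> i \<le> m then alpha n m i
        else if i = k then real m / real n - (\<Sum>l=k+1..m. alpha n m l) else 0)
     else if k \<le> n - 1 then
       (if m + 1 \<le> i \<and> i \<le> k - 1 then beta n m i
        else if i = k then real m / real n - (\<Sum>l=m+1..k-1. beta n m l) else 0)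
     else
       (if i = 0 then L * real m / real n - L * (\<Sum>l=m+1..n-1. beta n m l)
        else if m + 1 \<le> i \<and> i \<le> n - 1 then beta n m i else 0))"

definition is_OEL :: "nat \<Rightarrow> nat \<Rightarrow> real \<Rightarrow> real \<Rightarrow> ((nat \<Rightarrow> real) \<Rightarrow> nat set)
    \<Rightarrow> (nat \<Rightarrow> (nat \<Rightarrow> real) \<Rightarrow> real) \<Rightarrow> bool" where
  "is_OEL n m L U f t \<longleftrightarrow> (\<exists>k\<le>n. odd (int k - int m) \<and>
     (\<forall>\<theta>\<in>type_profiles n L U. \<forall>i<n. t i \<theta> = linear_mech n m f (oel_coeffs n m L U k) i \<theta>))"

end

theory Submission
  imports Defs "HOL-Library.Multiset"
begin

text \<open>
  Write \<open>x\<^sub>j\<close> for the \<open>j\<close>-th highest bid.  Summing the transfers of an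
  anonymous linear Groves mechanism over all bidders gives
  \<open>(n - 1)(W - top\<^sub>m) + B(x)\<close>, where \<open>W\<close> is the realised welfare, \<open>top\<^sub>m\<close> the sum of the
  \<open>m\<close> highest bids (so \<open>W = top\<^sub>m\<close> under efficiency) and \<open>B\<close> is an affine functional of
  the order statistics whose coefficients are linear in \<open>a\<close> (the "budget").

  Evaluating \<open>B\<close> at the \<open>n + 1\<close> vertex profiles (\<open>k\<close> bids equal to \<open>U\<close>, the rest \<open>L\<close>)
  gives numbers \<open>V\<^sub>0, \<dots>, V\<^sub>n\<close>, all \<open>\<le> 0\<close>
    by feasibility, and \<open>B\<close> at any profile is a
  convex combination of them weighted by the gaps between consecutive order statistics.
  If two of the \<open>V\<^sub>k\<close> were negative, the budget would be uniformly negative on a whole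
  slice of profiles (first \<open>n - 1\<close> bids on an equispaced grid), and paying the slack to
  the last bidder there would dominate the mechanism.  Hence all \<open>V\<^sub>j\<close> but one, \<open>V\<^sub>k\<close>,
  vanish.  These \<open>n\<close> linear equations in \<open>a\<close> have a unique solution, which is the OEL
  coefficient vector for \<open>k\<close>; an alternating binomial sum of the \<open>V\<^sub>j\<close> shows that
  \<open>V\<^sub>k < 0\<close> forces \<open>k - m\<close> to be odd.
\<close>

section \<open>Order statistics\<close>

definition ord_stat :: "nat \<Rightarrow> (nat \<Rightarrow> real) \<Rightarrow> nat \<Rightarrow> real" where
  "ord_stat n \<theta> j = kth_highest j (map \<theta> [0..<n])"

lemma kth_highest_conv_sort:
  "1 \<le> j \<Longrightarrow> j \<le> length xs \<Longrightarrow> kth_highest j xs = sort xs ! (length xs - j)"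
  unfolding kth_highest_def by (simp add: rev_nth)

lemma ord_stat_conv_sort:
  "1 \<le> j \<Longrightarrow> j \<le> n \<Longrightarrow> ord_stat n \<theta> j = sort (map \<theta> [0..<n]) ! (n - j)"
  unfolding ord_stat_def by (simp add: kth_highest_conv_sort)

lemma upt_split_at: "i < n \<Longrightarrow> [0..<n] = [0..<i] @ i # [Suc i..<n]"
  by (metis le0 le_add_diff_inverse less_imp_le upt_add_eq_append upt_conv_Cons)

lemma mset_profile_split:
  "i < n \<Longrightarrow> mset (map \<theta> [0..<n]) = mset (others n i \<theta>) + {#\<theta> i#}"
  by (simp add: others_def upt_split_at filter_id_conv)

lemma length_others: "i < n \<Longrightarrow> length (others n i \<theta>) = n - 1"
  by (simp add: others_def upt_split_at filter_id_conv)

lemma sort_others: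
  "i < n \<Longrightarrow> sort (others n i \<theta>) = remove1 (\<theta> i) (sort (map \<theta> [0..<n]))"
proof (rule properties_for_sort)
  assume "i < n"
  then show "mset (remove1 (\<theta> i) (sort (map \<theta> [0..<n]))) = mset (others n i \<theta>)"
    by (simp only: mset_profile_split mset_remove1 mset_sort) simp
qed (simp add: sorted_remove1)

lemma remove1_nth_sorted:
  "sorted xs \<Longrightarrow> p < length xs \<Longrightarrow> q < length xs - 1 \<Longrightarrow>
   remove1 (xs!p) xs ! q = (if q < p then xs!q else xs!Suc q)"
proof (induction xs arbitrary: p q)
  case Nil
  then show ?case by simp
next
  case (Cons y ys)
  show ?case
  proof (cases p)
    case 0
    then show ?thesis by simp
  next
    case (Suc p')
    have sys: "sorted ys" and p': "p' < length ys" using Cons.prems Suc by simp_all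
    show ?thesis
    proof (cases "y = ys ! p'")
      case True
      \<comment> \<open>all entries up to position \<open>p\<close> coincide, so it does not matter which is deleted\<close>
      have eq: "ys ! k = y" if "k \<le> p'" for k
        using sorted_nth_mono[OF sys that p'] Cons.prems(1) that p' True
        by (simp add: order_antisym)
      have "remove1 ((y # ys) ! p) (y # ys) = ys" using True Suc by simp
      then show ?thesis using eq Suc by (cases q) auto
    next
      case False
      then have r: "remove1 ((y # ys) ! p) (y # ys) = y # remove1 (ys!p') ys" using Suc by simp
      show ?thesis
        using Cons.prems(3) Cons.IH[OF sys p'] False by (cases q) (simp_all add: r Suc)
    qed
  qed
qed

lemma sum_over_sorted_profile:
  "(\<Sum>i<n. g (\<theta> i)) = (\<Sum>p<n. g (sort (map \<theta> [0..<n]) ! p))"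
proof -
  have "(\<Sum>i<n. g (\<theta> i)) = sum_list (map g (map \<theta> [0..<n]))"
    by (simp add: sum_list_sum_nth atLeast0LessThan)
  also have "\<dots> = sum_list (map g (sort (map \<theta> [0..<n])))"
    by (metis mset_map mset_sort sum_mset_sum_list)
  also have "\<dots> = (\<Sum>p<n. g (sort (map \<theta> [0..<n]) ! p))"
    by (simp add: sum_list_sum_nth atLeast0LessThan)
  finally show ?thesis .
qed

lemma sum_if_less:
  "c < n \<Longrightarrow> (\<Sum>p<n. if c < p then A else B) = real (n - Suc c) * A + real (Suc c) * (B::real)"
proof -
  assume c: "c < n"
  have "(\<Sum>p<n. if c < p then A else B)
      = (\<Sum>p\<in>{..<n} \<inter> {p. c < p}. A) + (\<Sum>p\<in>{..<n} \<inter> - {p. c < p}. B)"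
    by (rule sum.If_cases) simp
  also have "{..<n} \<inter> {p. c < p} = {Suc c..<n}" by auto
  also have "{..<n} \<inter> - {p. c < p} = {..c}" using c by auto
  finally show ?thesis by simp
qed

text \<open>Summed over all bidders \<open>i\<close>, the \<open>j\<close>-th highest bid of the others equals
  \<open>x\<^sub>j\<close> for the \<open>n - j\<close> bidders outside the top \<open>j\<close> and \<open>x\<^sub>j\<^sub>+\<^sub>1\<close> for the \<open>j\<close> inside.\<close>
lemma sum_kth_highest_others:
  assumes "1 \<le> j" "j < n"
  shows "(\<Sum>i<n. kth_highest j (others n i \<theta>))
       = (real n - real j) * ord_stat n \<theta> j + real j * ord_stat n \<theta> (Suc j)"
proof -
  define as where "as = sort (map \<theta> [0..<n])"
  have las: "length as = n" and sas: "sorted as" by (simp_all add: as_def)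
  define \<phi> where "\<phi> v = remove1 v as ! (n - 1 - j)" for v
  have "kth_highest j (others n i \<theta>) = \<phi> (\<theta> i)" if "i < n" for i
    using that assms by (simp add: kth_highest_conv_sort length_others sort_others \<phi>_def as_def)
  then have "(\<Sum>i<n. kth_highest j (others n i \<theta>)) = (\<Sum>i<n. \<phi> (\<theta> i))" by simp
  also have "\<dots> = (\<Sum>p<n. \<phi> (as ! p))" unfolding as_def by (rule sum_over_sorted_profile)
  also have "\<dots> = (\<Sum>p<n. if n - 1 - j < p then as ! (n - 1 - j) else as ! (n - j))"
  proof (rule sum.cong[OF refl])
    fix p assume "p \<in> {..<n}"
    then have "p < length as" "n - 1 - j < length as - 1" using las assms by auto
    then show "\<phi> (as ! p) = (if n - 1 - j < p then as ! (n - 1 - j) else as ! (n - j))"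
      unfolding \<phi>_def using remove1_nth_sorted[OF sas] assms
      by (metis Suc_diff_Suc diff_Suc_eq_diff_pred le_eq_less_or_eq less_Suc_eq_le zero_less_diff)
  qed
  also have "\<dots> = real j * as ! (n - 1 - j) + (real n - real j) * as ! (n - j)"
    using assms by (subst sum_if_less) (auto simp: Suc_diff_Suc of_nat_diff)
  also have "as ! (n - 1 - j) = ord_stat n \<theta> (Suc j)" using assms by (simp add: ord_stat_conv_sort as_def)
  also have "as ! (n - j) = ord_stat n \<theta> j" using assms by (simp add: ord_stat_conv_sort as_def)
  finally show ?thesis by simp
qed

section \<open>The total transfer as a function of the order statistics\<close>

text \<open>Sum of the \<open>m\<close> highest bids: the welfare of an efficient allocation.\<close>
definition top_sum :: "nat \<Rightarrow> nat \<Rightarrow> (nat \<Rightarrow> real) \<Rightarrow> real" where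
  "top_sum n m \<theta> = (\<Sum>j=1..m. ord_stat n \<theta> j)"

text \<open>The budget functional: the part of the total transfer of the linear mechanism with
  coefficients \<open>a\<close> that is not accounted for by the efficiency loss, as an affine function
  of the vector \<open>x\<close> of order statistics.  \<open>budget_lin\<close> is its linear part.\<close>
definition budget_lin :: "nat \<Rightarrow> nat \<Rightarrow> (nat \<Rightarrow> real) \<Rightarrow> (nat \<Rightarrow> real) \<Rightarrow> real" where
  "budget_lin n m a x =
     (\<Sum>j=1..n-1. a j * ((real n - real j) * x j + real j * x (Suc j))) - real m * x (Suc m)"

definition budget :: "nat \<Rightarrow> nat \<Rightarrow> (nat \<Rightarrow> real) \<Rightarrow> (nat \<Rightarrow> real) \<Rightarrow> real" where
  "budget n m a x = real n * a 0 + budget_lin n m a x"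

text \<open>Summing the weights of \<open>sum_kth_highest_others\<close> over \<open>j = 1, \<dots>, k\<close>.\<close>
lemma telescoping_order_weights:
  "(\<Sum>j=1..k. (real n - real j) * x j + real j * x (Suc j))
     = (real n - 1) * (\<Sum>j=1..k. x j) + real k * x (Suc k)"
  by (induction k) (simp_all add: algebra_simps)

lemma total_transfer:
  assumes "1 \<le> m" "m < n"
  shows "(\<Sum>i<n. linear_mech n m f a i \<theta>)
       = (real n - 1) * ((\<Sum>j<n. valuation (f \<theta>) j (\<theta> j)) - top_sum n m \<theta>)
         + budget n m a (ord_stat n \<theta>)"
proof -
  define W where "W = (\<Sum>j<n. valuation (f \<theta>) j (\<theta> j))"
  have welfare: "(\<Sum>i<n. \<Sum>j\<in>{..<n} - {i}. valuation (f \<theta>) j (\<theta> j)) = (real n - 1) * W"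
  proof -
    have "(\<Sum>i<n. \<Sum>j\<in>{..<n} - {i}. valuation (f \<theta>) j (\<theta> j))
        = (\<Sum>i<n. W - valuation (f \<theta>) i (\<theta> i))"
      by (rule sum.cong[OF refl]) (simp add: sum_diff1 W_def)
    also have "\<dots> = real n * W - W" by (simp add: sum_subtractf W_def)
    finally show ?thesis by (simp add: algebra_simps)
  qed
  have clarke: "(\<Sum>i<n. \<Sum>j=1..m. kth_highest j (others n i \<theta>))
      = (real n - 1) * top_sum n m \<theta> + real m * ord_stat n \<theta> (Suc m)"
  proof -
    have "(\<Sum>i<n. \<Sum>j=1..m. kth_highest j (others n i \<theta>))
        = (\<Sum>j=1..m. \<Sum>i<n. kth_highest j (others n i \<theta>))"
      by (rule sum.swap)
    also have "\<dots> = (\<Sum>j=1..m. (real n - real j) * ord_stat n \<theta> j + real j * ord_stat n \<theta> (Suc j))"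
      using assms by (intro sum.cong[OF refl]) (simp add: sum_kth_highest_others)
    finally show ?thesis
      using telescoping_order_weights[where k=m and x="ord_stat n \<theta>" and n=n]
      by (simp add: top_sum_def)
  qed
  have linear: "(\<Sum>i<n. \<Sum>j=1..n-1. a j * kth_highest j (others n i \<theta>))
      = (\<Sum>j=1..n-1. a j * ((real n - real j) * ord_stat n \<theta> j + real j * ord_stat n \<theta> (Suc j)))"
    by (subst sum.swap, rule sum.cong[OF refl])
       (auto simp: sum_kth_highest_others simp flip: sum_distrib_left)
  have "(\<Sum>i<n. linear_mech n m f a i \<theta>)
      = (\<Sum>i<n. \<Sum>j\<in>{..<n} - {i}. valuation (f \<theta>) j (\<theta> j))
        - (\<Sum>i<n. \<Sum>j=1..m. kth_highest j (others n i \<theta>)) + real n * a 0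
        + (\<Sum>i<n. \<Sum>j=1..n-1. a j * kth_highest j (others n i \<theta>))"
    by (simp add: linear_mech_def vcg_def sum.distrib sum_subtractf)
  then show ?thesis
    unfolding welfare clarke linear budget_def budget_lin_def W_def by (simp add: algebra_simps)
qed

lemma budget_cong:
  assumes h: "\<And>j. 1 \<le> j \<Longrightarrow> j \<le> n \<Longrightarrow> x j = y j" and m: "m < n"
  shows "budget n m a x = budget n m a y"
proof -
  have "(\<Sum>j=1..n-1. a j * ((real n - real j) * x j + real j * x (Suc j))) =
        (\<Sum>j=1..n-1. a j * ((real n - real j) * y j + real j * y (Suc j)))"
    by (rule sum.cong[OF refl]) (auto simp: h)
  moreover have "x (Suc m) = y (Suc m)" using h m by simp
  ultimately show ?thesis unfolding budget_def budget_lin_def by simp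
qed

lemma budget_lin_sum:
  "budget_lin n m a (\<lambda>i. \<Sum>k\<in>K. w k * y k i) = (\<Sum>k\<in>K. w k * budget_lin n m a (y k))"
proof -
  have "(\<Sum>k\<in>K. w k * budget_lin n m a (y k)) =
     (\<Sum>j=1..n-1. \<Sum>k\<in>K. w k * (a j * ((real n - real j) * y k j + real j * y k (Suc j))))
     - (\<Sum>k\<in>K. w k * (real m * y k (Suc m)))"
    unfolding budget_lin_def
    by (simp only: right_diff_distrib sum_subtractf sum_distrib_left sum.swap[where A=K])
  also have "(\<Sum>j=1..n-1. \<Sum>k\<in>K. w k * (a j * ((real n - real j) * y k j + real j * y k (Suc j))))
     = (\<Sum>j=1..n-1. a j * ((real n - real j) * (\<Sum>k\<in>K. w k * y k j)
                             + real j * (\<Sum>k\<in>K. w k * y k (Suc j))))"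
    by (rule sum.cong[OF refl])
       (simp add: sum_distrib_left sum.distrib distrib_left mult.assoc mult.left_commute)
  also have "(\<Sum>k\<in>K. w k * (real m * y k (Suc m))) = real m * (\<Sum>k\<in>K. w k * y k (Suc m))"
    by (simp add: sum_distrib_left mult.left_commute)
  finally show ?thesis unfolding budget_lin_def by simp
qed

section \<open>Welfare of efficient allocations\<close>

lemma valuation_sum:
  "S \<subseteq> {..<n} \<Longrightarrow> (\<Sum>j<n. valuation S j (\<theta> j)) = (\<Sum>j\<in>S. \<theta> j)"
proof -
  assume S: "S \<subseteq> {..<n}"
  have "(\<Sum>j<n. valuation S j (\<theta> j)) = sum \<theta> ({..<n} \<inter> S)"
    by (simp add: valuation_def sum.inter_restrict)
  also have "{..<n} \<inter> S = S" using S by auto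
  finally show ?thesis .
qed

lemma subset_sum_le_top_sum:
  assumes S: "S \<subseteq> {..<n}" and cS: "card S = m" and m: "1 \<le> m" "m \<le> n"
  shows "(\<Sum>j\<in>S. \<theta> j) \<le> top_sum n m \<theta>"
proof -
  define as where "as = sort (map \<theta> [0..<n])"
  have las: "length as = n" and sas: "sorted as" by (simp_all add: as_def)
  define \<tau> where "\<tau> = as ! (n - m)"
  \<comment> \<open>the \<open>m\<close>-th highest bid \<open>\<tau>\<close> serves as a threshold: \<open>\<theta> j \<le> \<tau> + (\<theta> j - \<tau>)\<^sup>+\<close>\<close>
  have "(\<Sum>j\<in>S. \<theta> j) \<le> (\<Sum>j\<in>S. \<tau> + max (\<theta> j - \<tau>) 0)"
    by (rule sum_mono) simp
  also have "\<dots> = real m * \<tau> + (\<Sum>j\<in>S. max (\<theta> j - \<tau>) 0)"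
    by (simp add: sum.distrib cS)
  also have "(\<Sum>j\<in>S. max (\<theta> j - \<tau>) 0) \<le> (\<Sum>j<n. max (\<theta> j - \<tau>) 0)"
    by (rule sum_mono2) (use S in auto)
  also have "(\<Sum>j<n. max (\<theta> j - \<tau>) 0) = (\<Sum>p<n. max (as ! p - \<tau>) 0)"
    unfolding as_def by (rule sum_over_sorted_profile)
  also have "\<dots> = (\<Sum>p\<in>{n-m..<n}. as ! p - \<tau>)"
  proof -
    have "max (as ! p - \<tau>) 0 = (if n - m \<le> p then as ! p - \<tau> else 0)" if "p < n" for p
      using sorted_nth_mono[OF sas, of "n - m" p] sorted_nth_mono[OF sas, of p "n - m"] that m las
      by (auto simp: \<tau>_def)
    then have "(\<Sum>p<n. max (as ! p - \<tau>) 0) = (\<Sum>p\<in>{..<n} \<inter> {p. n - m \<le> p}. as ! p - \<tau>)"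
      by (simp add: sum.inter_restrict)
    also have "{..<n} \<inter> {p. n - m \<le> p} = {n-m..<n}" by auto
    finally show ?thesis .
  qed
  also have "\<dots> = (\<Sum>p\<in>{n-m..<n}. as ! p) - real m * \<tau>"
    using m by (simp add: sum_subtractf)
  also have "(\<Sum>p\<in>{n-m..<n}. as ! p) = (\<Sum>j=1..m. as ! (n - j))"
    by (rule sum.reindex_bij_witness[where i="\<lambda>p. n - p" and j="\<lambda>p. n - p"]) (use m in auto)
  also have "\<dots> = top_sum n m \<theta>"
    unfolding top_sum_def as_def using m by (intro sum.cong[OF refl]) (simp add: ord_stat_conv_sort)
  finally show ?thesis by simp
qed

lemma efficient_welfare_le_top_sum:
  assumes "efficient n m L U f" "\<theta> \<in> type_profiles n L U" "1 \<le> m" "m \<le> n"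
  shows "(\<Sum>j<n. valuation (f \<theta>) j (\<theta> j)) \<le> top_sum n m \<theta>"
proof -
  have "f \<theta> \<in> decisions n m" using assms(1,2) by (simp add: efficient_def)
  then have S: "f \<theta> \<subseteq> {..<n}" "card (f \<theta>) = m" by (simp_all add: decisions_def)
  then show ?thesis using subset_sum_le_top_sum[OF S assms(3,4)] valuation_sum[OF S(1)] by simp
qed

lemma ord_stat_antimono_profile:
  assumes dec: "\<And>i j. i \<le> j \<Longrightarrow> j < n \<Longrightarrow> \<theta> j \<le> \<theta> i" and j: "1 \<le> j" "j \<le> n"
  shows "ord_stat n \<theta> j = \<theta> (j - 1)"
proof -
  have "sort (map \<theta> [0..<n]) = rev (map \<theta> [0..<n])"
    by (rule properties_for_sort) (simp_all add: sorted_iff_nth_mono rev_nth dec)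
  then show ?thesis using j by (simp add: ord_stat_conv_sort rev_nth)
qed

lemma efficient_welfare_antimono_profile:
  assumes "efficient n m L U f" "\<theta> \<in> type_profiles n L U" "1 \<le> m" "m \<le> n"
    and dec: "\<And>i j. i \<le> j \<Longrightarrow> j < n \<Longrightarrow> \<theta> j \<le> \<theta> i"
  shows "top_sum n m \<theta> \<le> (\<Sum>j<n. valuation (f \<theta>) j (\<theta> j))"
proof -
  have d: "{..<m} \<in> decisions n m" using assms by (auto simp: decisions_def)
  have "(\<Sum>j<n. valuation {..<m} j (\<theta> j)) \<le> (\<Sum>j<n. valuation (f \<theta>) j (\<theta> j))"
    using assms(1,2) d by (simp add: efficient_def)
  moreover have "(\<Sum>j<n. valuation {..<m} j (\<theta> j)) = (\<Sum>j<m. \<theta> j)"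
    using assms by (subst valuation_sum) auto
  moreover have "top_sum n m \<theta> = (\<Sum>j<m. \<theta> j)"
  proof -
    have "top_sum n m \<theta> = (\<Sum>j=1..m. \<theta> (j - 1))"
      unfolding top_sum_def using assms
      by (intro sum.cong[OF refl]) (simp add: ord_stat_antimono_profile)
    also have "\<dots> = (\<Sum>j<m. \<theta> j)"
      by (rule sum.reindex_bij_witness[where i="\<lambda>j. j + 1" and j="\<lambda>j. j - 1"]) auto
    finally show ?thesis .
  qed
  ultimately show ?thesis by simp
qed

section \<open>Vertex budgets\<close>

text \<open>The \<open>k\<close>-th vertex of the ordered type cube: \<open>k\<close> order statistics equal to \<open>U\<close>, the
  others to \<open>L\<close>; \<open>vertex_budget\<close> is the budget there (\<open>V\<^sub>k\<close> in the overview).\<close>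
definition vertex :: "real \<Rightarrow> real \<Rightarrow> nat \<Rightarrow> nat \<Rightarrow> real" where
  "vertex L U k i = (if i \<le> k then U else L)"

definition vertex_budget :: "nat \<Rightarrow> nat \<Rightarrow> real \<Rightarrow> real \<Rightarrow> (nat \<Rightarrow> real) \<Rightarrow> nat \<Rightarrow> real" where
  "vertex_budget n m L U a k = budget n m a (vertex L U k)"

text \<open>Feasibility at the vertex profiles (where efficiency costs nothing) means
  \<open>V\<^sub>k \<le> 0\<close>.\<close>
lemma vertex_budget_nonpos:
  assumes eff: "efficient n m L U f" and fe: "feasible n L U (linear_mech n m f a)"
    and m: "1 \<le> m" "m < n" and LU: "L \<le> U"
  shows "vertex_budget n m L U a k \<le> 0"
proof -
  define \<theta> where "\<theta> j = (if j < k then U else L)" for j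
  have tp: "\<theta> \<in> type_profiles n L U" using LU by (simp add: type_profiles_def \<theta>_def)
  have dec: "\<And>i j. i \<le> j \<Longrightarrow> j < n \<Longrightarrow> \<theta> j \<le> \<theta> i"
    using LU by (simp add: \<theta>_def)
  have "(\<Sum>i<n. linear_mech n m f a i \<theta>) \<le> 0" using fe tp by (simp add: feasible_def)
  moreover have "top_sum n m \<theta> \<le> (\<Sum>j<n. valuation (f \<theta>) j (\<theta> j))"
    using efficient_welfare_antimono_profile[OF eff tp] m dec by simp
  moreover have "1 \<le> real n" using m by simp
  ultimately have "budget n m a (ord_stat n \<theta>) \<le> 0"
    using total_transfer[OF m, of f a \<theta>] by (smt (verit) mult_nonneg_nonneg)
  moreover have "budget n m a (ord_stat n \<theta>) = vertex_budget n m L U a k"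
    unfolding vertex_budget_def using m
    by (intro budget_cong) (auto simp: ord_stat_antimono_profile[OF dec] \<theta>_def vertex_def)
  ultimately show ?thesis by simp
qed

text \<open>Any non-increasing \<open>U = x\<^sub>0 \<ge> x\<^sub>1 \<ge> \<dots> \<ge> x\<^sub>n\<^sub>+\<^sub>1 = L\<close> is the combination of the vertices
  with the gaps \<open>x\<^sub>k - x\<^sub>k\<^sub>+\<^sub>1\<close> as weights; since the budget is affine, it interpolates the
  vertex budgets accordingly.\<close>
lemma budget_barycentric:
  assumes x0: "x 0 = U" and xn: "x (Suc n) = L" and m: "m < n"
  shows "(\<Sum>k\<le>n. (x k - x (Suc k)) * vertex_budget n m L U a k) = (U - L) * budget n m a x"
proof -
  define d where "d k = x k - x (Suc k)" for k
  have total_weight: "(\<Sum>k\<le>n. d k) = U - L"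
    using sum_lessThan_telescope'[of x "Suc n"] x0 xn by (simp add: d_def lessThan_Suc_atMost)
  have combination: "(\<Sum>k\<le>n. d k * vertex L U k i) = (U - L) * x i" if i: "i \<le> Suc n" for i
  proof -
    have "(\<Sum>k\<le>n. d k * vertex L U k i)
        = (\<Sum>k\<in>{..n} \<inter> {k. i \<le> k}. d k * U) + (\<Sum>k\<in>{..n} \<inter> - {k. i \<le> k}. d k * L)"
      unfolding vertex_def by (simp add: if_distrib sum.If_cases)
    also have "{..n} \<inter> {k. i \<le> k} = {i..n}" by auto
    also have "{..n} \<inter> - {k. i \<le> k} = {..<i}" using i by auto
    also have "(\<Sum>k\<in>{i..n}. d k * U) = U * (x i - x (Suc n))"
    proof -
      have "(\<Sum>k\<in>{i..n}. x (Suc k) - x k) = x (Suc n) - x i" using i by (rule sum_Suc_diff)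
      then show ?thesis by (simp add: d_def sum_subtractf flip: sum_distrib_right)
    qed
    also have "(\<Sum>k<i. d k * L) = L * (x 0 - x i)"
      using sum_lessThan_telescope'[of x i] by (simp add: d_def mult.commute flip: sum_distrib_left)
    finally show ?thesis using x0 xn by (simp add: algebra_simps)
  qed
  have "(\<Sum>k\<le>n. d k * vertex_budget n m L U a k)
      = (\<Sum>k\<le>n. d k * (real n * a 0) + d k * budget_lin n m a (vertex L U k))"
    by (simp add: vertex_budget_def budget_def algebra_simps)
  also have "\<dots> = (U - L) * (real n * a 0) + budget_lin n m a (\<lambda>i. \<Sum>k\<le>n. d k * vertex L U k i)"
    by (simp add: sum.distrib total_weight budget_lin_sum flip: sum_distrib_right)
  also have "budget_lin n m a (\<lambda>i. \<Sum>k\<le>n. d k * vertex L U k i)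
           = budget_lin n m a (\<lambda>i. (U - L) * x i)"
    using m unfolding budget_lin_def by (intro arg_cong2[where f="(-)"] sum.cong) (auto simp: combination)
  also have "\<dots> = (U - L) * budget_lin n m a x"
    unfolding budget_lin_def by (simp add: algebra_simps sum_distrib_left)
  finally show ?thesis by (simp add: d_def budget_def algebra_simps)
qed

section \<open>Undominated mechanisms leave no uniform slack on a slice\<close>

lemma groves_add_bonus:
  assumes gr: "groves n L U f t" and b: "\<forall>i<n. depends_only_on_others n i (b i)"
  shows "groves n L U f (\<lambda>i \<theta>. t i \<theta> + b i \<theta>)"
proof -
  obtain h where h: "\<forall>i<n. depends_only_on_others n i (h i)"
    and t: "\<forall>\<theta>\<in>type_profiles n L U. \<forall>i<n. t i \<theta> = (\<Sum>j\<in>{..<n} - {i}. valuation (f \<theta>) j (\<theta> j)) + h i \<theta>"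
    using gr unfolding groves_def by blast
  have "\<forall>i<n. depends_only_on_others n i (\<lambda>\<theta>. h i \<theta> + b i \<theta>)"
    using h b unfolding depends_only_on_others_def by metis
  then show ?thesis using t unfolding groves_def by (intro exI[of _ "\<lambda>i \<theta>. h i \<theta> + b i \<theta>"]) auto
qed

text \<open>If a feasible Groves mechanism runs a surplus of at least \<open>\<delta> > 0\<close> on every profile
  in which bidders \<open>0, \<dots>, n - 2\<close> report the fixed values \<open>c\<close>, paying \<open>\<delta>\<close> to the last
  bidder on that slice (which does not depend on her own report) dominates it.\<close>
lemma dominated_if_slack_on_slice:
  assumes gr: "groves n L U f t" and fe: "feasible n L U t" and \<delta>: "\<delta> > 0" and n: "1 \<le> n"
    and c: "\<forall>j<n-1. c j \<in> {L..U}" and LU: "L \<le> U"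
    and slack: "\<forall>\<theta>\<in>type_profiles n L U. (\<forall>j<n-1. \<theta> j = c j) \<longrightarrow> (\<Sum>i<n. t i \<theta>) \<le> -\<delta>"
  shows "\<exists>t'. groves n L U f t' \<and> feasible n L U t' \<and> dominates n L U t' t"
proof -
  define P where "P \<theta> \<longleftrightarrow> (\<forall>j<n-1. \<theta> j = c j)" for \<theta> :: "nat \<Rightarrow> real"
  define b where "b i \<theta> = (if i = n - 1 \<and> P \<theta> then \<delta> else 0)" for i \<theta>
  define t' where "t' i \<theta> = t i \<theta> + b i \<theta>" for i \<theta>
  have total_bonus: "(\<Sum>i<n. b i \<theta>) = (if P \<theta> then \<delta> else 0)" for \<theta>
    using n by (simp add: b_def sum.delta)
  have "\<forall>i<n. depends_only_on_others n i (b i)"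
    unfolding depends_only_on_others_def b_def P_def by auto
  then have "groves n L U f t'" unfolding t'_def by (rule groves_add_bonus[OF gr])
  moreover have "feasible n L U t'"
    unfolding feasible_def
  proof
    fix \<theta> assume tp: "\<theta> \<in> type_profiles n L U"
    have "(\<Sum>i<n. t' i \<theta>) = (\<Sum>i<n. t i \<theta>) + (if P \<theta> then \<delta> else 0)"
      by (simp only: t'_def sum.distrib total_bonus)
    then show "(\<Sum>i<n. t' i \<theta>) \<le> 0"
      using fe tp slack by (cases "P \<theta>") (auto simp: feasible_def P_def)
  qed
  moreover have "dominates n L U t' t"
    unfolding dominates_def
  proof
    show "\<forall>\<theta>\<in>type_profiles n L U. \<forall>i<n. t i \<theta> \<le> t' i \<theta>"
      using \<delta> by (simp add: t'_def b_def)
    define \<theta>s where "\<theta>s j = (if j < n - 1 then c j else L)" for j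
    have "\<theta>s \<in> type_profiles n L U" using c LU by (auto simp: type_profiles_def \<theta>s_def)
    moreover have "P \<theta>s" by (simp add: P_def \<theta>s_def)
    ultimately show "\<exists>\<theta>\<in>type_profiles n L U. \<exists>i<n. t i \<theta> < t' i \<theta>"
      using \<delta> n by (intro bexI[of _ \<theta>s] exI[of _ "n - 1"]) (auto simp: t'_def b_def)
  qed
  ultimately show ?thesis by blast
qed

definition ext_ord_stat :: "nat \<Rightarrow> real \<Rightarrow> real \<Rightarrow> (nat \<Rightarrow> real) \<Rightarrow> nat \<Rightarrow> real" where
  "ext_ord_stat n L U \<theta> k = (if k = 0 then U else if k = Suc n then L else ord_stat n \<theta> k)"

lemma ext_ord_stat_conv_padded:
  "k \<le> Suc n \<Longrightarrow> ext_ord_stat n L U \<theta> k = (L # sort (map \<theta> [0..<n]) @ [U]) ! (Suc n - k)"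
  by (auto simp: ext_ord_stat_def ord_stat_conv_sort nth_append Suc_diff_le)

lemma sorted_padded_profile:
  assumes "\<theta> \<in> type_profiles n L U" "L \<le> U"
  shows "sorted (L # sort (map \<theta> [0..<n]) @ [U])"
  using assms by (auto simp: sorted_append type_profiles_def)

lemma ext_ord_stat_gap:
  assumes tp: "\<theta> \<in> type_profiles n L U" and LU: "L \<le> U" and k: "k \<le> n"
  shows "L \<le> ext_ord_stat n L U \<theta> (Suc k)" "ext_ord_stat n L U \<theta> (Suc k) \<le> ext_ord_stat n L U \<theta> k"
    "ext_ord_stat n L U \<theta> k \<le> U"
    "\<And>i. i < n \<Longrightarrow> \<theta> i \<le> ext_ord_stat n L U \<theta> (Suc k) \<or> ext_ord_stat n L U \<theta> k \<le> \<theta> i"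
proof -
  define ps where "ps = L # sort (map \<theta> [0..<n]) @ [U]"
  have sps: "sorted ps" and lps: "length ps = Suc (Suc n)"
    using sorted_padded_profile[OF tp LU] by (simp_all add: ps_def)
  have lo: "ext_ord_stat n L U \<theta> (Suc k) = ps ! (n - k)"
   and hi: "ext_ord_stat n L U \<theta> k = ps ! Suc (n - k)"
    using k ext_ord_stat_conv_padded[of "Suc k" n L U \<theta>] ext_ord_stat_conv_padded[of k n L U \<theta>]
    by (simp_all add: ps_def Suc_diff_le)
  show "L \<le> ext_ord_stat n L U \<theta> (Suc k)"
    using sorted_nth_mono[OF sps, of 0 "n - k"] lps by (simp add: lo ps_def)
  show "ext_ord_stat n L U \<theta> (Suc k) \<le> ext_ord_stat n L U \<theta> k"
    using sorted_nth_mono[OF sps, of "n - k" "Suc (n - k)"] lps by (simp add: lo hi)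
  show "ext_ord_stat n L U \<theta> k \<le> U"
    using sorted_nth_mono[OF sps, of "Suc (n - k)" "Suc n"] lps k
    by (simp add: hi ps_def nth_append)
  fix i assume i: "i < n"
  then have "\<theta> i \<in> set (sort (map \<theta> [0..<n]))" by simp
  then obtain r where "r < length (sort (map \<theta> [0..<n]))" "sort (map \<theta> [0..<n]) ! r = \<theta> i"
    by (meson in_set_conv_nth)
  then have r: "r < n" "\<theta> i = ps ! Suc r" by (simp_all add: ps_def nth_append)
  show "\<theta> i \<le> ext_ord_stat n L U \<theta> (Suc k) \<or> ext_ord_stat n L U \<theta> k \<le> \<theta> i"
    using sorted_nth_mono[OF sps, of "Suc r" "n - k"] sorted_nth_mono[OF sps, of "Suc (n - k)" "Suc r"] r lps
    by (cases "Suc r \<le> n - k") (auto simp: lo hi)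
qed

lemma grid_point_between:
  fixes A B h :: real
  assumes h: "h > 0" and width: "U - L = real n * h" and AL: "L \<le> A" and gap: "A + h < B" and BU: "B \<le> U"
  shows "\<exists>j. 1 \<le> j \<and> j < n \<and> A < U - real j * h \<and> U - real j * h < B"
proof -
  define r where "r = (U - B) / h"
  have r0: "0 \<le> r" using BU h by (simp add: r_def)
  define j where "j = nat \<lfloor>r\<rfloor> + 1"
  have j: "r < real j" "real j \<le> r + 1" using r0 by (simp_all add: j_def) linarith+
  have below: "U - real j * h < B"
    using j(1) h by (simp add: r_def pos_divide_less_eq algebra_simps)
  have "real j * h \<le> (r + 1) * h" using j(2) h by (simp add: mult_right_mono)
  also have "\<dots> = U - B + h" using h by (simp add: r_def field_simps)
  finally have above: "A < U - real j * h" using gap by simp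
  then have "real j * h < real n * h" using AL width by simp
  then have "j < n" using h by simp
  then show ?thesis using above below by (intro exI[of _ j]) (simp add: j_def)
qed

definition grid_bid :: "nat \<Rightarrow> real \<Rightarrow> real \<Rightarrow> nat \<Rightarrow> real" where
  "grid_bid n L U j = U - real (Suc j) * ((U - L) / real n)"

lemma grid_bid_range:
  assumes "L \<le> U" "j < n"
  shows "grid_bid n L U j \<in> {L..U}"
proof -
  have "real (Suc j) * ((U - L) / real n) \<le> real n * ((U - L) / real n)"
    using assms by (intro mult_right_mono) auto
  then show ?thesis using assms by (simp add: grid_bid_def)
qed

text \<open>On the slice, every gap between consecutive padded order statistics is at most
  the mesh \<open>(U - L)/n\<close>, since each open gap is free of bids.\<close>
lemma slice_gaps:
  assumes tp: "\<theta> \<in> type_profiles n L U" and LU: "L < U" and n: "2 \<le> n"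
    and slice: "\<forall>j<n-1. \<theta> j = grid_bid n L U j" and k: "k \<le> n"
  shows "0 \<le> ext_ord_stat n L U \<theta> k - ext_ord_stat n L U \<theta> (Suc k)"
    "ext_ord_stat n L U \<theta> k - ext_ord_stat n L U \<theta> (Suc k) \<le> (U - L) / real n"
proof -
  define h where "h = (U - L) / real n"
  have h: "h > 0" and width: "U - L = real n * h" using LU n by (simp_all add: h_def)
  note gap = ext_ord_stat_gap[OF tp less_imp_le[OF LU] k]
  show "0 \<le> ext_ord_stat n L U \<theta> k - ext_ord_stat n L U \<theta> (Suc k)" using gap(2) by simp
  show "ext_ord_stat n L U \<theta> k - ext_ord_stat n L U \<theta> (Suc k) \<le> (U - L) / real n"
  proof (rule ccontr)
    assume "\<not> ?thesis"
    then obtain j where j: "1 \<le> j" "j < n"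
      and inside: "ext_ord_stat n L U \<theta> (Suc k) < U - real j * h" "U - real j * h < ext_ord_stat n L U \<theta> k"
      using grid_point_between[OF h width gap(1) _ gap(3)] by (auto simp: h_def)
    have "\<theta> (j - 1) = U - real j * h" using slice j by (simp add: grid_bid_def h_def)
    moreover have "j - 1 < n" using j by simp
    ultimately show False using gap(4)[of "j - 1"] inside by auto
  qed
qed

lemma two_gaps_large:
  fixes d :: "nat \<Rightarrow> real"
  assumes d: "\<And>k. k \<le> n \<Longrightarrow> 0 \<le> d k \<and> d k \<le> h" and total: "(\<Sum>k\<le>n. d k) = real n * h"
    and pq: "p \<le> n" "q \<le> n" "p \<noteq> q"
  shows "h \<le> d p + d q"
proof -
  define R where "R = {..n} - {p, q}"
  have "card R = n - 1" using pq by (simp add: R_def card_Diff_subset)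
  moreover have "(\<Sum>k\<in>R. d k) \<le> real (card R) * h"
    using d by (intro sum_bounded_above) (auto simp: R_def)
  moreover have "(\<Sum>k\<le>n. d k) = d p + d q + (\<Sum>k\<in>R. d k)"
    using pq by (subst sum.subset_diff[of "{p, q}"]) (auto simp: R_def)
  ultimately show ?thesis using total pq by (simp add: of_nat_diff algebra_simps)
qed

text \<open>If all vertex budgets are \<open>\<le> 0\<close> and two of them are \<open>\<le> M\<close>, the budget on the whole
  slice is at most \<open>M/n\<close>: two vertices always carry a total weight of at least \<open>1/n\<close>.\<close>
lemma slice_budget_bound:
  assumes n: "2 \<le> n" and m: "m < n" and LU: "L < U"
    and V: "\<And>k. vertex_budget n m L U a k \<le> 0" and M: "M \<le> 0"
    and Vp: "vertex_budget n m L U a p \<le> M" and Vq: "vertex_budget n m L U a q \<le> M"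
    and pq: "p \<le> n" "q \<le> n" "p \<noteq> q"
    and tp: "\<theta> \<in> type_profiles n L U" and slice: "\<forall>j<n-1. \<theta> j = grid_bid n L U j"
  shows "real n * budget n m a (ord_stat n \<theta>) \<le> M"
proof -
  define h where "h = (U - L) / real n"
  have h: "h > 0" and width: "U - L = real n * h" using LU n by (simp_all add: h_def)
  define e where "e = ext_ord_stat n L U \<theta>"
  define d where "d k = e k - e (Suc k)" for k
  have d_bounds: "0 \<le> d k \<and> d k \<le> h" if "k \<le> n" for k
    using slice_gaps[OF tp LU n slice that] by (simp add: d_def e_def h_def)
  have total: "(\<Sum>k\<le>n. d k) = real n * h"
    using sum_lessThan_telescope'[of e "Suc n"] width
    by (simp add: d_def e_def ext_ord_stat_def lessThan_Suc_atMost)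
  have "real n * h * budget n m a (ord_stat n \<theta>) = (\<Sum>k\<le>n. d k * vertex_budget n m L U a k)"
  proof -
    have "budget n m a (ord_stat n \<theta>) = budget n m a e"
      using m by (intro budget_cong) (auto simp: e_def ext_ord_stat_def)
    then show ?thesis
      using budget_barycentric[of e U n L m a] width m by (simp add: d_def e_def ext_ord_stat_def)
  qed
  also have "\<dots> = d p * vertex_budget n m L U a p + d q * vertex_budget n m L U a q
      + (\<Sum>k\<in>{..n} - {p, q}. d k * vertex_budget n m L U a k)"
    using pq by (subst sum.subset_diff[of "{p, q}"]) auto
  also have "\<dots> \<le> d p * M + d q * M + 0"
    using d_bounds pq Vp Vq V
    by (intro add_mono mult_left_mono sum_nonpos mult_nonneg_nonpos) auto
  also have "\<dots> \<le> h * M"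
    using two_gaps_large[OF d_bounds total pq] M by (simp add: mult_right_mono_neg flip: distrib_right)
  finally show ?thesis using h by (simp add: mult.assoc)
qed

lemma at_most_one_negative_vertex:
  assumes n: "2 \<le> n" and m: "1 \<le> m" "m < n" and LU: "L < U"
    and eff: "efficient n m L U f" and fe: "feasible n L U (linear_mech n m f a)"
    and und: "undominated n L U f (linear_mech n m f a)"
    and pq: "p \<le> n" "q \<le> n" "p \<noteq> q"
  shows "\<not> (vertex_budget n m L U a p < 0 \<and> vertex_budget n m L U a q < 0)"
proof
  assume neg: "vertex_budget n m L U a p < 0 \<and> vertex_budget n m L U a q < 0"
  define M where "M = max (vertex_budget n m L U a p) (vertex_budget n m L U a q)"
  have M: "M < 0" using neg by (simp add: M_def)
  define \<delta> where "\<delta> = - M / real n"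
  have \<delta>: "\<delta> > 0" using M n by (simp add: \<delta>_def divide_neg_pos)
  have V: "\<And>k. vertex_budget n m L U a k \<le> 0" using vertex_budget_nonpos[OF eff fe m] LU by simp
  have "\<forall>\<theta>\<in>type_profiles n L U. (\<forall>j<n-1. \<theta> j = grid_bid n L U j) \<longrightarrow>
      (\<Sum>i<n. linear_mech n m f a i \<theta>) \<le> -\<delta>"
  proof (intro ballI impI)
    fix \<theta> assume tp: "\<theta> \<in> type_profiles n L U" and slice: "\<forall>j<n-1. \<theta> j = grid_bid n L U j"
    have "real n * budget n m a (ord_stat n \<theta>) \<le> M"
      using slice_budget_bound[OF n m(2) LU V _ _ _ pq tp slice] M by (simp add: M_def)
    then have "budget n m a (ord_stat n \<theta>) \<le> -\<delta>" using n by (simp add: \<delta>_def field_simps)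
    moreover have "(real n - 1) * ((\<Sum>j<n. valuation (f \<theta>) j (\<theta> j)) - top_sum n m \<theta>) \<le> 0"
      using efficient_welfare_le_top_sum[OF eff tp] m n by (simp add: mult_nonneg_nonpos)
    ultimately show "(\<Sum>i<n. linear_mech n m f a i \<theta>) \<le> -\<delta>"
      using total_transfer[OF m, of f a \<theta>] by simp
  qed
  then have "\<exists>t'. groves n L U f t' \<and> feasible n L U t' \<and> dominates n L U t' (linear_mech n m f a)"
    using und fe \<delta> n grid_bid_range LU
    by (intro dominated_if_slack_on_slice) (auto simp: undominated_def)
  then show False using und by (simp add: undominated_def)
qed

section \<open>Vertex budgets as linear functions of the coefficients\<close>

text \<open>\<open>V\<^sub>j - V\<^sub>j\<^sub>-\<^sub>1 = (U - L) \<cdot> vertex_jump n m a j\<close>: raising the \<open>j\<close>-th order statistic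
  from \<open>L\<close> to \<open>U\<close> changes the budget by this multiple of \<open>U - L\<close>.\<close>
definition vertex_jump :: "nat \<Rightarrow> nat \<Rightarrow> (nat \<Rightarrow> real) \<Rightarrow> nat \<Rightarrow> real" where
  "vertex_jump n m a j =
     (real j - 1) * a (j - 1) + (real n - real j) * a j - (if j = Suc m then real m else 0)"

text \<open>By linearity, \<open>V\<^sub>j - V\<^sub>j\<^sub>-\<^sub>1\<close> is the linear part of the budget applied to the difference
  of two adjacent vertices, which is \<open>U - L\<close> in coordinate \<open>j\<close> and \<open>0\<close> elsewhere.\<close>
lemma budget_lin_diff:
  "budget_lin n m a x - budget_lin n m a y = budget_lin n m a (\<lambda>i. x i - y i)"
proof -
  have "(\<Sum>j=1..n-1. a j * ((real n - real j) * (x j - y j) + real j * (x (Suc j) - y (Suc j))))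
      = (\<Sum>j=1..n-1. a j * ((real n - real j) * x j + real j * x (Suc j))
                      - a j * ((real n - real j) * y j + real j * y (Suc j)))"
    by (rule sum.cong[OF refl]) (simp add: algebra_simps)
  also have "\<dots> = (\<Sum>j=1..n-1. a j * ((real n - real j) * x j + real j * x (Suc j)))
                - (\<Sum>j=1..n-1. a j * ((real n - real j) * y j + real j * y (Suc j)))"
    by (rule sum_subtractf)
  finally show ?thesis unfolding budget_lin_def by (simp add: algebra_simps)
qed

lemma budget_lin_unit:
  assumes j: "1 \<le> j" "j \<le> n"
  shows "budget_lin n m a (\<lambda>i. if i = j then c else 0) = c * vertex_jump n m a j"
proof -
  have "budget_lin n m a (\<lambda>i. if i = j then c else 0)
      = (\<Sum>i=1..n-1. if i = j then a i * (real n - real i) * c else 0)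
      + (\<Sum>i=1..n-1. if i = j - 1 then a i * real i * c else 0)
      - real m * (if Suc m = j then c else 0)"
    unfolding budget_lin_def sum.distrib[symmetric] using j
    by (intro arg_cong2[where f="(-)"] sum.cong) auto
  also have "(\<Sum>i=1..n-1. if i = j then a i * (real n - real i) * c else 0) = a j * (real n - real j) * c"
    using j by (subst sum.delta) auto
  also have "(\<Sum>i=1..n-1. if i = j - 1 then a i * real i * c else 0) = a (j - 1) * (real j - 1) * c"
    using j by (subst sum.delta) (auto simp: of_nat_diff)
  finally show ?thesis by (auto simp: vertex_jump_def algebra_simps)
qed

lemma vertex_budget_step:
  assumes j: "1 \<le> j" "j \<le> n"
  shows "vertex_budget n m L U a j - vertex_budget n m L U a (j - 1) = (U - L) * vertex_jump n m a j"
proof -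
  have "(\<lambda>i. vertex L U j i - vertex L U (j - 1) i) = (\<lambda>i. if i = j then U - L else 0)"
    using j by (auto simp: vertex_def fun_eq_iff)
  then show ?thesis
    by (simp add: vertex_budget_def budget_def budget_lin_diff budget_lin_unit[OF j])
qed

lemma budget_const:
  "budget n m a (\<lambda>_. c) = real n * a 0 + real n * c * (\<Sum>i=1..n-1. a i) - real m * c"
proof -
  have "(\<Sum>j=1..n-1. a j * ((real n - real j) * c + real j * c)) = (\<Sum>j=1..n-1. real n * c * a j)"
    by (rule sum.cong[OF refl]) (simp add: algebra_simps)
  then show ?thesis unfolding budget_def budget_lin_def by (simp add: sum_distrib_left)
qed

text \<open>The two extreme vertices are constant profiles.\<close>
lemma vertex_budget_0:
  "m < n \<Longrightarrow> vertex_budget n m L U a 0 = real n * a 0 + real n * L * (\<Sum>i=1..n-1. a i) - real m * L"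
  unfolding vertex_budget_def by (subst budget_cong[where y="\<lambda>_. L"]) (auto simp: vertex_def budget_const)

lemma vertex_budget_n:
  "m < n \<Longrightarrow> vertex_budget n m L U a n = real n * a 0 + real n * U * (\<Sum>i=1..n-1. a i) - real m * U"
  unfolding vertex_budget_def by (subst budget_cong[where y="\<lambda>_. U"]) (auto simp: vertex_def budget_const)

section \<open>The linear system singled out by a vertex\<close>

text \<open>The conditions "\<open>V\<^sub>j = 0\<close> for all \<open>j \<noteq> k\<close>", rewritten through the jumps: all jumps
  except those into and out of vertex \<open>k\<close> vanish, as do \<open>V\<^sub>0\<close> (unless \<open>k = 0\<close>) and
  \<open>V\<^sub>n\<close> (unless \<open>k = n\<close>).\<close>
definition jump_equations :: "nat \<Rightarrow> nat \<Rightarrow> real \<Rightarrow> real \<Rightarrow> nat \<Rightarrow> (nat \<Rightarrow> real) \<Rightarrow> bool" where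
  "jump_equations n m L U k a \<longleftrightarrow>
     (\<forall>j. 1 \<le> j \<and> j \<le> n \<and> j \<noteq> k \<and> j \<noteq> Suc k \<longrightarrow> vertex_jump n m a j = 0) \<and>
     (k \<noteq> 0 \<longrightarrow> real n * a 0 + real n * L * (\<Sum>i=1..n-1. a i) - real m * L = 0) \<and>
     (k \<noteq> n \<longrightarrow> real n * a 0 + real n * U * (\<Sum>i=1..n-1. a i) - real m * U = 0)"

lemma jump_equations_if_single_vertex:
  assumes m: "m < n" and LU: "L < U"
    and V: "\<forall>j\<le>n. j \<noteq> k \<longrightarrow> vertex_budget n m L U a j = 0"
  shows "jump_equations n m L U k a"
proof -
  have "vertex_jump n m a j = 0" if j: "1 \<le> j" "j \<le> n" "j \<noteq> k" "j \<noteq> Suc k" for j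
  proof -
    have "j - 1 \<noteq> k" using j by auto
    then have "(U - L) * vertex_jump n m a j = 0"
      using V j vertex_budget_step[OF j(1,2), of m L U a] by simp
    then show ?thesis using LU by simp
  qed
  then show ?thesis
    unfolding jump_equations_def using V vertex_budget_0[OF m] vertex_budget_n[OF m] by auto
qed

text \<open>The homogeneous jump recurrence \<open>(j - 1) b\<^sub>j\<^sub>-\<^sub>1 + (n - j) b\<^sub>j = 0\<close>, imposed for all
  \<open>j \<notin> {k, k + 1}\<close>, forces \<open>b\<^sub>i = 0\<close> for \<open>1 \<le> i < n\<close>, \<open>i \<noteq> k\<close>: propagate upwards from
  \<open>b\<^sub>1\<close> below \<open>k\<close> and downwards from \<open>b\<^sub>n\<^sub>-\<^sub>1\<close> above \<open>k\<close>.\<close>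
lemma homogeneous_jumps_vanish:
  fixes b :: "nat \<Rightarrow> real"
  assumes rec: "\<And>j. 1 \<le> j \<Longrightarrow> j \<le> n \<Longrightarrow> j \<noteq> k \<Longrightarrow> j \<noteq> Suc k \<Longrightarrow>
                   (real j - 1) * b (j - 1) + (real n - real j) * b j = 0"
    and i: "1 \<le> i" "i < n" "i \<noteq> k"
  shows "b i = 0"
proof (cases "i < k")
  case True
  from i(1) show ?thesis
  proof (induction i rule: dec_induct)
    case base
    show ?case using rec[of 1] True i by simp
  next
    case (step l)
    then have "real l * b l + (real n - real (Suc l)) * b (Suc l) = 0"
      using rec[of "Suc l"] True i by simp
    then show ?case using step True i by simp
  qed
next
  case False
  then have ki: "k < i" using i by simp
  have "i \<le> n - 1" using i by simp
  then show ?thesis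
  proof (induction i rule: inc_induct)
    case base
    show ?case using rec[of n] ki i by (simp add: of_nat_diff)
  next
    case (step l)
    then have "real l * b l + (real n - real (Suc l)) * b (Suc l) = 0"
      using rec[of "Suc l"] ki by simp
    then show ?case using step ki i by simp
  qed
qed

lemma jump_equations_unique:
  assumes ea: "jump_equations n m L U k a" and ec: "jump_equations n m L U k c"
    and LU: "L < U" and k: "k \<le> n" and i: "i < n"
  shows "a i = c i"
proof -
  define b where "b i = a i - c i" for i
  have zero: "b i = 0" if "1 \<le> i" "i < n" "i \<noteq> k" for i
  proof (rule homogeneous_jumps_vanish[OF _ that])
    fix j assume "1 \<le> j" "j \<le> n" "j \<noteq> k" "j \<noteq> Suc k"
    then have "vertex_jump n m a j = 0" "vertex_jump n m c j = 0"
      using ea ec unfolding jump_equations_def by blast+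
    then show "(real j - 1) * b (j - 1) + (real n - real j) * b j = 0"
      by (simp add: vertex_jump_def b_def algebra_simps)
  qed
  define s where "s = (\<Sum>i=1..n-1. b i)"
  have s: "s = (if 1 \<le> k \<and> k < n then b k else 0)"
  proof -
    have "s = (\<Sum>i=1..n-1. if i = k then b k else 0)"
      unfolding s_def by (rule sum.cong) (auto simp: zero)
    then show ?thesis by auto
  qed
  have s_diff: "s = (\<Sum>i=1..n-1. a i) - (\<Sum>i=1..n-1. c i)"
    by (simp add: s_def b_def sum_subtractf)
  have low: "k \<noteq> 0 \<Longrightarrow> real n * (b 0 + L * s) = 0"
   and high: "k \<noteq> n \<Longrightarrow> real n * (b 0 + U * s) = 0"
    using ea ec unfolding jump_equations_def s_diff by (simp_all add: b_def algebra_simps)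
  have n: "n \<noteq> 0" using i by simp
  \<comment> \<open>for \<open>0 < k < n\<close> both boundary equations hold and \<open>L \<noteq> U\<close> separates \<open>b\<^sub>0\<close> from \<open>b\<^sub>k\<close>\<close>
  have "b 0 = 0 \<and> s = 0"
  proof (cases "k = 0 \<or> k = n")
    case True
    then show ?thesis using s low high n by auto
  next
    case False
    then have "b 0 + L * s = 0" "b 0 + U * s = 0" using low high n by auto
    moreover have "(U - L) * s = (b 0 + U * s) - (b 0 + L * s)" by (simp add: algebra_simps)
    ultimately have "(U - L) * s = 0" by simp
    then have "s = 0" using LU by simp
    then show ?thesis using \<open>b 0 + L * s = 0\<close> by simp
  qed
  then have "b i = 0" using zero[of i] s i by (cases "i = 0"; cases "i = k") auto
  then show ?thesis by (simp add: b_def)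
qed

section \<open>The OEL coefficients solve the jump equations\<close>

lemma binomial_step: "Suc k * (N choose Suc k) = (N - k) * (N choose k)"
  using binomial_absorption[of k N] binomial_absorb_comp[of N k] by simp

text \<open>Cross-multiplied form of the recurrence \<open>(j - 1) \<alpha>\<^sub>j\<^sub>-\<^sub>1 + (n - j) \<alpha>\<^sub>j = 0\<close>.\<close>
lemma alpha_binomial_cross:
  assumes j: "2 \<le> j" "j \<le> m" and mn: "m < n"
  shows "(j - 1) * ((n - j) choose (n - m - 1)) * ((m - 1) choose (j - 1))
       = (n - j) * ((n - j - 1) choose (n - m - 1)) * ((m - 1) choose (j - 2))"
proof -
  have lower: "(j - 1) * ((m - 1) choose (j - 1)) = (m + 1 - j) * ((m - 1) choose (j - 2))"
    using binomial_step[of "j - 2" "m - 1"] j by (simp add: Suc_diff_Suc numeral_2_eq_2)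
  have upper: "(m + 1 - j) * ((n - j) choose (n - m - 1)) = (n - j) * ((n - j - 1) choose (n - m - 1))"
    using binomial_absorb_comp[of "n - j" "n - m - 1"] j mn by (simp add: diff_diff_left)
  show ?thesis using lower upper by (metis mult.assoc mult.left_commute)
qed

lemma alpha_rec:
  assumes j: "2 \<le> j" "j \<le> m" and mn: "m < n"
  shows "(real j - 1) * alpha n m (j - 1) + (real n - real j) * alpha n m j = 0"
proof -
  define A where "A = real ((n - j) choose (n - m - 1))"
  define B where "B = real ((n - j - 1) choose (n - m - 1))"
  define P where "P = real ((m - 1) choose (j - 2))"
  define Q where "Q = real ((m - 1) choose (j - 1))"
  have PQ: "P > 0" "Q > 0" using j by (simp_all add: P_def Q_def)
  have cross: "(real j - 1) * A * Q = (real n - real j) * B * P"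
    using arg_cong[OF alpha_binomial_cross[OF j mn], of real] j mn
    by (simp add: A_def B_def P_def Q_def of_nat_diff)
  define s :: real where "s = (-1) ^ (m - j)"
  have "alpha n m (j - 1) = - s * (A / P)"
  proof -
    have "m - (j - 1) = Suc (m - j)" "n - (j - 1) - 1 = n - j" "j - 1 - 1 = j - 2" using j by auto
    then show ?thesis by (simp add: alpha_def A_def P_def s_def)
  qed
  moreover have "alpha n m j = s * (B / Q)"
    by (simp add: alpha_def B_def Q_def s_def)
  moreover have "(real j - 1) * (A / P) = (real n - real j) * (B / Q)"
    using cross PQ by (simp add: field_simps)
  moreover have "(real j - 1) * (c * X) + (real n - real j) * (d * Y)
      = c * ((real j - 1) * X) + d * ((real n - real j) * Y)" for c d X Y :: real
    by (simp add: algebra_simps)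
  ultimately show ?thesis by (simp only:)
qed

text \<open>Cross-multiplied form of \<open>(j - 1) \<beta>\<^sub>j\<^sub>-\<^sub>1 + (n - j) \<beta>\<^sub>j = 0\<close>.\<close>
lemma beta_binomial_cross:
  assumes j: "m + 2 \<le> j" "j \<le> n - 1" and m: "1 \<le> m"
  shows "(j - 1) * ((j - 2) choose (m - 1)) * ((n - m - 1) choose (n - j - 1))
       = (n - j) * ((j - 1) choose (m - 1)) * ((n - m - 1) choose (n - j))"
proof -
  have lower: "(j - m) * ((j - 1) choose (m - 1)) = (j - 1) * ((j - 2) choose (m - 1))"
    using binomial_absorb_comp[of "j - 1" "m - 1"] j m by (simp add: numeral_2_eq_2)
  have upper: "(n - j) * ((n - m - 1) choose (n - j)) = (j - m) * ((n - m - 1) choose (n - j - 1))"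
    using binomial_step[of "n - j - 1" "n - m - 1"] j by (simp add: Suc_diff_Suc)
  show ?thesis using lower upper by (metis mult.assoc mult.left_commute)
qed

lemma beta_rec:
  assumes j: "m + 2 \<le> j" "j \<le> n - 1" and m: "1 \<le> m"
  shows "(real j - 1) * beta n m (j - 1) + (real n - real j) * beta n m j = 0"
proof -
  define A where "A = real ((j - 2) choose (m - 1))"
  define B where "B = real ((j - 1) choose (m - 1))"
  define P where "P = real ((n - m - 1) choose (n - j))"
  define Q where "Q = real ((n - m - 1) choose (n - j - 1))"
  have PQ: "P > 0" "Q > 0" using j by (simp_all add: P_def Q_def)
  have cross: "(real j - 1) * A * Q = (real n - real j) * B * P"
    using arg_cong[OF beta_binomial_cross[OF j m], of real] j
    by (simp add: A_def B_def P_def Q_def of_nat_diff)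
  define s :: real where "s = (-1) ^ (j - m - 2)"
  have "beta n m (j - 1) = s * (A / P)"
  proof -
    have "j - 1 - m - 1 = j - m - 2" "j - 1 - 1 = j - 2" "n - (j - 1) - 1 = n - j" using j by auto
    then show ?thesis by (simp add: beta_def A_def P_def s_def)
  qed
  moreover have "beta n m j = - s * (B / Q)"
  proof -
    have "j - m - 1 = Suc (j - m - 2)" using j by simp
    then show ?thesis by (simp add: beta_def B_def Q_def s_def)
  qed
  moreover have "(real j - 1) * (A / P) = (real n - real j) * (B / Q)"
    using cross PQ by (simp add: field_simps)
  moreover have "(real j - 1) * (c * X) + (real n - real j) * (d * Y)
      = c * ((real j - 1) * X) + d * ((real n - real j) * Y)" for c d X Y :: real
    by (simp add: algebra_simps)
  ultimately show ?thesis by (simp only:)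
qed

text \<open>The jump at the support boundary \<open>m + 1\<close>: \<open>(n - m - 1) \<beta>\<^sub>m\<^sub>+\<^sub>1 = m\<close> and \<open>\<alpha>\<^sub>m = 1\<close>
  compensate the term \<open>m\<close> in \<open>vertex_jump\<close>.\<close>
lemma beta_first:
  assumes "m + 1 \<le> n - 1" "1 \<le> m"
  shows "(real n - real (Suc m)) * beta n m (Suc m) = real m"
proof -
  obtain m' where m': "m = Suc m'" using assms by (cases m) auto
  obtain q where q: "n - m - 1 = Suc q" using assms by (cases "n - m - 1") auto
  have "n - Suc m - 1 = q" using q by simp
  then have "beta n m (Suc m) = real m / real (n - m - 1)"
    using m' q by (simp add: beta_def)
  moreover have "real n - real (Suc m) = real (n - m - 1)" using assms by (simp add: of_nat_diff)
  moreover have "real (n - m - 1) > 0" using q by simp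
  ultimately show ?thesis by simp
qed

lemma alpha_last: "alpha n m m = 1"
  by (simp add: alpha_def)

lemma sum_supported_on:
  fixes n p q :: nat
  assumes "\<And>i. i \<in> {1..n-1} \<Longrightarrow> i \<notin> {p..q} \<Longrightarrow> c i = (0::real)" "{p..q} \<subseteq> {1..n-1}"
  shows "(\<Sum>i=1..n-1. c i) = (\<Sum>i=p..q. c i)"
  using assms by (intro sum.mono_neutral_right) auto

text \<open>Inside the support the recurrences for \<open>\<alpha>\<close> or \<open>\<beta>\<close> apply; the boundary
  coefficient is chosen so that the budget vanishes at the constant profiles.\<close>
lemma oel_jump_equations_0:
  assumes n: "2 \<le> n" and m: "1 \<le> m" "m < n"
  shows "jump_equations n m L U 0 (oel_coeffs n m L U 0)"
proof -
  define c where "c = oel_coeffs n m L U 0"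
  have c0: "c 0 = U * real m / real n - U * (\<Sum>l=1..m. alpha n m l)" by (simp add: c_def oel_coeffs_def)
  have ca: "\<And>i. 1 \<le> i \<Longrightarrow> i \<le> m \<Longrightarrow> c i = alpha n m i"
    by (simp add: c_def oel_coeffs_def)
  have cz: "\<And>i. m < i \<Longrightarrow> c i = 0" by (simp add: c_def oel_coeffs_def)
  have jumps: "vertex_jump n m c j = 0" if j: "1 \<le> j" "j \<le> n" "j \<noteq> 0" "j \<noteq> Suc 0" for j
  proof -
    consider "j \<le> m" | "j = Suc m" | "Suc m < j" by linarith
    then show ?thesis
    proof cases
      case 1
      then show ?thesis using j alpha_rec[of j m n] ca[of "j - 1"] ca[of j] m by (simp add: vertex_jump_def)
    next
      case 2
      then show ?thesis using ca[of m] cz[of "Suc m"] m alpha_last[of n m] by (simp add: vertex_jump_def)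
    next
      case 3
      then show ?thesis using cz[of j] cz[of "j - 1"] by (simp add: vertex_jump_def)
    qed
  qed
  have coeff_sum: "(\<Sum>i=1..n-1. c i) = (\<Sum>l=1..m. alpha n m l)"
  proof -
    have "(\<Sum>i=1..n-1. c i) = (\<Sum>i=1..m. c i)"
      using m by (intro sum_supported_on) (auto intro: cz)
    also have "\<dots> = (\<Sum>l=1..m. alpha n m l)" by (rule sum.cong) (auto simp: ca)
    finally show ?thesis .
  qed
  have at_U: "real n * c 0 + real n * U * (\<Sum>i=1..n-1. c i) - real m * U = 0"
    using n unfolding coeff_sum c0 by (simp add: field_simps)
  show ?thesis unfolding jump_equations_def c_def[symmetric] using jumps at_U by auto
qed

lemma oel_jump_equations_low:
  assumes n: "2 \<le> n" and m: "1 \<le> m" "m < n" and k: "1 \<le> k" "k \<le> m"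
  shows "jump_equations n m L U k (oel_coeffs n m L U k)"
proof -
  define c where "c = oel_coeffs n m L U k"
  have c0: "c 0 = 0" using k by (simp add: c_def oel_coeffs_def)
  have ck: "c k = real m / real n - (\<Sum>l=k+1..m. alpha n m l)" using k by (simp add: c_def oel_coeffs_def)
  have ca: "\<And>i. k + 1 \<le> i \<Longrightarrow> i \<le> m \<Longrightarrow> c i = alpha n m i"
    using k by (simp add: c_def oel_coeffs_def)
  have cz: "\<And>i. m < i \<Longrightarrow> c i = 0" using k by (simp add: c_def oel_coeffs_def)
  have cl: "\<And>i. i < k \<Longrightarrow> c i = 0" using k by (simp add: c_def oel_coeffs_def)
  have jumps: "vertex_jump n m c j = 0" if j: "1 \<le> j" "j \<le> n" "j \<noteq> k" "j \<noteq> Suc k" for j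
  proof -
    consider "j < k" | "k + 2 \<le> j" "j \<le> m" | "j = Suc m" | "Suc m < j" using j by linarith
    then show ?thesis
    proof cases
      case 1
      then show ?thesis using cl[of j] cl[of "j - 1"] k by (simp add: vertex_jump_def)
    next
      case 2
      then show ?thesis using j alpha_rec[of j m n] ca[of "j - 1"] ca[of j] m by (simp add: vertex_jump_def)
    next
      case 3
      then have "k + 1 \<le> m" using j k by arith
      then show ?thesis using 3 ca[of m] cz[of "Suc m"] m alpha_last[of n m] by (simp add: vertex_jump_def)
    next
      case 4
      then show ?thesis using cz[of j] cz[of "j - 1"] by (simp add: vertex_jump_def)
    qed
  qed
  have coeff_sum: "(\<Sum>i=1..n-1. c i) = real m / real n"
  proof -
    have "(\<Sum>i=1..n-1. c i) = (\<Sum>i=k..m. c i)"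
      using m k by (intro sum_supported_on) (auto intro: cz cl)
    also have "\<dots> = c k + (\<Sum>i=Suc k..m. c i)" using k by (subst sum.atLeast_Suc_atMost) auto
    also have "(\<Sum>i=Suc k..m. c i) = (\<Sum>l=k+1..m. alpha n m l)" by (rule sum.cong) (auto simp: ca)
    finally show ?thesis using ck by simp
  qed
  have at_L: "real n * c 0 + real n * L * (\<Sum>i=1..n-1. c i) - real m * L = 0"
    using n unfolding coeff_sum c0 by (simp add: field_simps)
  have at_U: "real n * c 0 + real n * U * (\<Sum>i=1..n-1. c i) - real m * U = 0"
    using n unfolding coeff_sum c0 by (simp add: field_simps)
  show ?thesis unfolding jump_equations_def c_def[symmetric] using jumps at_L at_U by auto
qed

lemma oel_jump_equations_high:
  assumes n: "2 \<le> n" and m: "1 \<le> m" "m < n" and k: "m + 1 \<le> k" "k \<le> n - 1"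
  shows "jump_equations n m L U k (oel_coeffs n m L U k)"
proof -
  define c where "c = oel_coeffs n m L U k"
  have c0: "c 0 = 0" using k by (simp add: c_def oel_coeffs_def)
  have kk: "k \<noteq> 0" "\<not> k \<le> k - 1" "\<not> k \<le> m" "k \<le> n - 1" using k by auto
  have ck: "c k = real m / real n - (\<Sum>l=m+1..k-1. beta n m l)" using kk by (simp add: c_def oel_coeffs_def)
  have cb: "\<And>i. m + 1 \<le> i \<Longrightarrow> i \<le> k - 1 \<Longrightarrow> c i = beta n m i"
    using k by (simp add: c_def oel_coeffs_def)
  have cz: "\<And>i. k < i \<Longrightarrow> c i = 0" using kk by (simp add: c_def oel_coeffs_def)
  have cl: "\<And>i. i \<le> m \<Longrightarrow> c i = 0" using k by (simp add: c_def oel_coeffs_def)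
  have jumps: "vertex_jump n m c j = 0" if j: "1 \<le> j" "j \<le> n" "j \<noteq> k" "j \<noteq> Suc k" for j
  proof -
    consider "j \<le> m" | "j = Suc m" "j < k" | "m + 2 \<le> j" "j < k" | "Suc k < j" using j by linarith
    then show ?thesis
    proof cases
      case 1
      then show ?thesis using cl[of j] cl[of "j - 1"] by (simp add: vertex_jump_def)
    next
      case 2
      then show ?thesis using cl[of m] cb[of "Suc m"] m k beta_first[of m n] by (simp add: vertex_jump_def)
    next
      case 3
      then show ?thesis using j k beta_rec[of m j n] cb[of "j - 1"] cb[of j] m by (simp add: vertex_jump_def)
    next
      case 4
      then show ?thesis using cz[of j] cz[of "j - 1"] k by (simp add: vertex_jump_def)
    qed
  qed
  have coeff_sum: "(\<Sum>i=1..n-1. c i) = real m / real n"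
  proof -
    obtain k' where k': "k = Suc k'" using k by (cases k) auto
    have "(\<Sum>i=1..n-1. c i) = (\<Sum>i=m+1..k. c i)"
      using m k by (intro sum_supported_on) (auto intro: cz cl)
    also have "\<dots> = (\<Sum>i=m+1..k-1. c i) + c k" using k k' by (simp add: sum.cl_ivl_Suc)
    also have "(\<Sum>i=m+1..k-1. c i) = (\<Sum>l=m+1..k-1. beta n m l)" by (rule sum.cong) (auto simp: cb)
    finally show ?thesis using ck by simp
  qed
  have at_L: "real n * c 0 + real n * L * (\<Sum>i=1..n-1. c i) - real m * L = 0"
    using n unfolding coeff_sum c0 by (simp add: field_simps)
  have at_U: "real n * c 0 + real n * U * (\<Sum>i=1..n-1. c i) - real m * U = 0"
    using n unfolding coeff_sum c0 by (simp add: field_simps)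
  show ?thesis unfolding jump_equations_def c_def[symmetric] using jumps at_L at_U by auto
qed

lemma oel_jump_equations_n:
  assumes n: "2 \<le> n" and m: "1 \<le> m" "m < n"
  shows "jump_equations n m L U n (oel_coeffs n m L U n)"
proof -
  define c where "c = oel_coeffs n m L U n"
  have nn: "n \<noteq> 0" "\<not> n \<le> n - 1" "\<not> n \<le> m" using m by auto
  have c0: "c 0 = L * real m / real n - L * (\<Sum>l=m+1..n-1. beta n m l)" using nn by (simp add: c_def oel_coeffs_def)
  have cb: "\<And>i. m + 1 \<le> i \<Longrightarrow> i \<le> n - 1 \<Longrightarrow> c i = beta n m i"
    using nn by (simp add: c_def oel_coeffs_def)
  have cl: "\<And>i. 1 \<le> i \<Longrightarrow> i \<le> m \<Longrightarrow> c i = 0"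
    using m by (simp add: c_def oel_coeffs_def)
  have jumps: "vertex_jump n m c j = 0" if j: "1 \<le> j" "j \<le> n" "j \<noteq> n" "j \<noteq> Suc n" for j
  proof -
    consider "j = 1" | "2 \<le> j" "j \<le> m" | "j = Suc m" | "m + 2 \<le> j" using j by linarith
    then show ?thesis
    proof cases
      case 1
      then show ?thesis using m cl[of 1] by (simp add: vertex_jump_def)
    next
      case 2
      then show ?thesis using cl[of j] cl[of "j - 1"] by (simp add: vertex_jump_def)
    next
      case 3
      then show ?thesis using j cl[of m] cb[of "Suc m"] m beta_first[of m n] by (simp add: vertex_jump_def)
    next
      case 4
      then show ?thesis using j beta_rec[of m j n] cb[of "j - 1"] cb[of j] m by (simp add: vertex_jump_def)
    qed
  qed
  have coeff_sum: "(\<Sum>i=1..n-1. c i) = (\<Sum>l=m+1..n-1. beta n m l)"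
  proof -
    have "(\<Sum>i=1..n-1. c i) = (\<Sum>i=m+1..n-1. c i)"
      using m by (intro sum_supported_on) (auto intro: cl)
    also have "\<dots> = (\<Sum>l=m+1..n-1. beta n m l)" by (rule sum.cong) (auto simp: cb)
    finally show ?thesis .
  qed
  have at_L: "real n * c 0 + real n * L * (\<Sum>i=1..n-1. c i) - real m * L = 0"
    using n unfolding coeff_sum c0 by (simp add: field_simps)
  show ?thesis unfolding jump_equations_def c_def[symmetric] using jumps at_L by auto
qed

lemma oel_jump_equations:
  assumes n: "2 \<le> n" and m: "1 \<le> m" "m < n" and k: "k \<le> n"
  shows "jump_equations n m L U k (oel_coeffs n m L U k)"
proof -
  consider "k = 0" | "1 \<le> k" "k \<le> m" | "m + 1 \<le> k" "k \<le> n - 1" | "k = n" using k by linarith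
  then show ?thesis
  proof cases
    case 1 then show ?thesis using oel_jump_equations_0[OF n m] by simp
  next
    case 2 then show ?thesis using oel_jump_equations_low[OF n m] by simp
  next
    case 3 then show ?thesis using oel_jump_equations_high[OF n m] by simp
  next
    case 4 then show ?thesis using oel_jump_equations_n[OF n m] by simp
  qed
qed

section \<open>Parity of the distinguished vertex\<close>

text \<open>Alternating binomial weights \<open>\<lambda>\<^sub>j = (-1)\<^sup>j\<^sup>-\<^sup>1 C(n - 1, j - 1)\<close>; they annihilate the
  coefficient-dependent part of the jumps (as an \<open>(n-1)\<close>-th finite difference).\<close>
definition alt_binom :: "nat \<Rightarrow> nat \<Rightarrow> real" where
  "alt_binom n j = (-1) ^ (j - 1) * real ((n - 1) choose (j - 1))"

lemma alt_binom_rec: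
  assumes i: "1 \<le> i" "i \<le> n - 1"
  shows "alt_binom n (Suc i) * real i + alt_binom n i * (real n - real i) = 0"
proof -
  obtain i' where i': "i = Suc i'" using i by (cases i) auto
  have "real (i * ((n - 1) choose i)) = real ((n - i) * ((n - 1) choose i'))"
    using binomial_step[of i' "n - 1"] i' by simp
  then have e: "real ((n - 1) choose i) * real i = real ((n - 1) choose i') * (real n - real i)"
    using i by (simp add: of_nat_diff mult.commute)
  show ?thesis unfolding alt_binom_def using i' e by simp
qed

lemma alternating_jump_sum:
  assumes n: "2 \<le> n" and m: "m < n"
  shows "(\<Sum>j=1..n. alt_binom n j * vertex_jump n m a j) = - real m * alt_binom n (Suc m)"
proof -
  obtain n' where n': "n = Suc n'" using n by (cases n) auto
  define lower where "lower = (\<Sum>j=1..n. alt_binom n j * (real j - 1) * a (j - 1))"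
  define upper where "upper = (\<Sum>j=1..n. alt_binom n j * (real n - real j) * a j)"
  have "(\<Sum>j=1..n. alt_binom n j * vertex_jump n m a j)
      = (\<Sum>j=1..n. alt_binom n j * (real j - 1) * a (j - 1) + alt_binom n j * (real n - real j) * a j
                     - (if j = Suc m then alt_binom n j * real m else 0))"
    by (rule sum.cong[OF refl]) (simp add: vertex_jump_def algebra_simps)
  also have "\<dots> = lower + upper - alt_binom n (Suc m) * real m"
    using m by (simp only: sum.distrib sum_subtractf lower_def upper_def) (subst sum.delta, auto)
  also have "lower = (\<Sum>i=1..n-1. alt_binom n (Suc i) * real i * a i)"
  proof -
    have "lower = (\<Sum>j=Suc 1..Suc n'. alt_binom n j * (real j - 1) * a (j - 1))"
      unfolding lower_def using n' by (subst sum.atLeast_Suc_atMost) auto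
    also have "\<dots> = (\<Sum>i=1..n'. alt_binom n (Suc i) * real i * a i)"
      by (subst sum.shift_bounds_cl_Suc_ivl) simp
    finally show ?thesis using n' by simp
  qed
  also have "upper = (\<Sum>i=1..n-1. alt_binom n i * (real n - real i) * a i)"
    unfolding upper_def using n' by (simp add: sum.cl_ivl_Suc)
  also have "(\<Sum>i=1..n-1. alt_binom n (Suc i) * real i * a i)
           + (\<Sum>i=1..n-1. alt_binom n i * (real n - real i) * a i)
           = (\<Sum>i=1..n-1. (alt_binom n (Suc i) * real i + alt_binom n i * (real n - real i)) * a i)"
    by (simp add: sum.distrib[symmetric] algebra_simps)
  also have "\<dots> = 0" by (rule sum.neutral) (auto simp: alt_binom_rec)
  finally show ?thesis by simp
qed

text \<open>Weight of \<open>V\<^sub>k\<close> after summation by parts: \<open>\<lambda>\<^sub>k - \<lambda>\<^sub>k\<^sub>+\<^sub>1 = (-1)\<^sup>k\<^sup>+\<^sup>1 C(n, k)\<close>.\<close>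
lemma alt_binom_boundary:
  assumes "k \<le> n" "1 \<le> n"
  shows "(if 1 \<le> k then alt_binom n k else 0) - (if Suc k \<le> n then alt_binom n (Suc k) else 0)
       = (-1) ^ (k + 1) * real (n choose k)"
proof -
  obtain n' where n': "n = Suc n'" using assms by (cases n) auto
  show ?thesis
  proof (cases "k = 0")
    case True
    then show ?thesis using n' by (simp add: alt_binom_def)
  next
    case False
    then obtain k' where k': "k = Suc k'" by (cases k) auto
    show ?thesis
    proof (cases "k = n")
      case True
      then show ?thesis using n' k' by (simp add: alt_binom_def)
    next
      case False
      then have "Suc k \<le> n" using assms by simp
      then show ?thesis using n' k' by (simp add: alt_binom_def algebra_simps)
    qed
  qed
qed

lemma alternating_vertex_sum:
  assumes n: "2 \<le> n" and m: "m < n"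
  shows "(\<Sum>j=1..n. alt_binom n j * (vertex_budget n m L U a j - vertex_budget n m L U a (j - 1)))
       = - (U - L) * real m * alt_binom n (Suc m)"
proof -
  have "(\<Sum>j=1..n. alt_binom n j * (vertex_budget n m L U a j - vertex_budget n m L U a (j - 1)))
      = (U - L) * (\<Sum>j=1..n. alt_binom n j * vertex_jump n m a j)"
    unfolding sum_distrib_left
  proof (rule sum.cong[OF refl])
    fix j assume "j \<in> {1..n}"
    then show "alt_binom n j * (vertex_budget n m L U a j - vertex_budget n m L U a (j - 1))
        = (U - L) * (alt_binom n j * vertex_jump n m a j)"
      using vertex_budget_step[of j n m L U a] by simp
  qed
  then show ?thesis using alternating_jump_sum[OF n m] by (simp add: algebra_simps)
qed

text \<open>If \<open>V\<^sub>k\<close> is the only nonzero vertex budget, the alternating sum equals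
  \<open>(-1)\<^sup>k\<^sup>+\<^sup>1 C(n, k) V\<^sub>k\<close>, while it is \<open>(-1)\<^sup>m\<^sup>+\<^sup>1 (U - L) m C(n - 1, m)\<close> in general;
  \<open>V\<^sub>k \<le> 0\<close> then forces \<open>k\<close> and \<open>m\<close> to have opposite parity.\<close>
lemma single_vertex_parity:
  assumes n: "2 \<le> n" and m: "1 \<le> m" "m < n" and LU: "L < U" and k: "k \<le> n"
    and V: "\<forall>j\<le>n. j \<noteq> k \<longrightarrow> vertex_budget n m L U a j = 0"
    and Vk: "vertex_budget n m L U a k \<le> 0"
  shows "odd (int k - int m)"
proof -
  define v where "v = vertex_budget n m L U a k"
  have Vj: "vertex_budget n m L U a j = (if j = k then v else 0)" if "j \<le> n" for j
    using V that by (auto simp: v_def)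
  have "(\<Sum>j=1..n. alt_binom n j * (vertex_budget n m L U a j - vertex_budget n m L U a (j - 1)))
      = (\<Sum>j=1..n. (if j = k then alt_binom n j * v else 0) - (if j = Suc k then alt_binom n j * v else 0))"
  proof (rule sum.cong[OF refl])
    fix j assume "j \<in> {1..n}"
    then have "j - 1 \<le> n" "j \<le> n" "(j - 1 = k) = (j = Suc k)" by auto
    then show "alt_binom n j * (vertex_budget n m L U a j - vertex_budget n m L U a (j - 1))
        = (if j = k then alt_binom n j * v else 0) - (if j = Suc k then alt_binom n j * v else 0)"
      by (simp add: Vj)
  qed
  also have "\<dots> = ((if 1 \<le> k then alt_binom n k else 0) - (if Suc k \<le> n then alt_binom n (Suc k) else 0)) * v"
    using k by (simp add: sum_subtractf algebra_simps)
  also have "\<dots> = (-1) ^ (k + 1) * real (n choose k) * v"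
    using alt_binom_boundary[OF k] n by simp
  finally have "(-1) ^ (k + 1) * real (n choose k) * v
      = - (U - L) * real m * ((-1) ^ m * real ((n - 1) choose m))"
    using alternating_vertex_sum[OF n m(2)] by (simp add: alt_binom_def)
  moreover have "0 < (U - L) * real m * real ((n - 1) choose m)" using LU m by simp
  moreover have "real (n choose k) * v \<le> 0" using Vk by (simp add: v_def mult_nonneg_nonpos)
  ultimately show ?thesis
    by (cases "even k"; cases "even m") (auto simp: algebra_simps)
qed

lemma single_nonzero_vertex:
  assumes n: "2 \<le> n" and m: "1 \<le> m" "m < n" and LU: "L < U"
    and eff: "efficient n m L U f" and fe: "feasible n L U (linear_mech n m f a)"
    and und: "undominated n L U f (linear_mech n m f a)"
  obtains k where "k \<le> n" "\<forall>j\<le>n. j \<noteq> k \<longrightarrow> vertex_budget n m L U a j = 0"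
proof (cases "\<exists>p\<le>n. vertex_budget n m L U a p < 0")
  case True
  then obtain p where p: "p \<le> n" "vertex_budget n m L U a p < 0" by blast
  have "vertex_budget n m L U a j = 0" if "j \<le> n" "j \<noteq> p" for j
    using at_most_one_negative_vertex[OF n m LU eff fe und that(1) p(1)] that p
      vertex_budget_nonpos[OF eff fe m less_imp_le[OF LU], of j] by linarith
  then show ?thesis using that p by blast
next
  case False
  then have "\<forall>j\<le>n. vertex_budget n m L U a j = 0"
    using vertex_budget_nonpos[OF eff fe m less_imp_le[OF LU]] by (meson not_le order_antisym)
  then show ?thesis using that[of 0] by simp
qed

lemma linear_mech_cong:
  "(\<forall>i<n. a i = c i) \<Longrightarrow> 1 \<le> n \<Longrightarrow> linear_mech n m f a i \<theta> = linear_mech n m f c i \<theta>"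
  unfolding linear_mech_def by (intro arg_cong2[where f="(+)"] sum.cong) auto

theorem theorem2:
  fixes n m :: nat and L U :: real
    and f :: "(nat \<Rightarrow> real) \<Rightarrow> nat set"
    and a :: "nat \<Rightarrow> real"
  assumes "2 \<le> n" and "1 \<le> m" and "m \<le> n - 1" and "L < U"
    and "efficient n m L U f"
    and "feasible n L U (linear_mech n m f a)"
    and "undominated n L U f (linear_mech n m f a)"
  shows "is_OEL n m L U f (linear_mech n m f a)"
proof -
  note n = assms(1) and LU = assms(4) and eff = assms(5) and fe = assms(6) and und = assms(7)
  have m: "1 \<le> m" "m < n" using assms(1-3) by auto
  obtain k where k: "k \<le> n" and V: "\<forall>j\<le>n. j \<noteq> k \<longrightarrow> vertex_budget n m L U a j = 0"
    using single_nonzero_vertex[OF n m LU eff fe und] .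
  have "odd (int k - int m)"
    using single_vertex_parity[OF n m LU k V] vertex_budget_nonpos[OF eff fe m] LU by simp
  moreover have "\<forall>i<n. a i = oel_coeffs n m L U k i"
    using jump_equations_unique[OF jump_equations_if_single_vertex[OF m(2) LU V]
        oel_jump_equations[OF n m k] LU k] by blast
  ultimately show ?thesis
    unfolding is_OEL_def using k linear_mech_cong n by auto
qed

end
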